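(* Let $1\le d<n$, $r=d(n-d)$, $\mathfrak C$ a maximal chain in $I(d,n)$ and $1\le t\le r-1$. (i) If $F_t(\mathfrak C)\neq0$, then $\sigma_{F_t(\mathfrak C)}=\sigma_{\mathfrak C}s_t$ and $\ell(\sigma_{F_t(\mathfrak C)})=\ell(\sigma_{\mathfrak C})+1$; in particular $\sigma_{F_t(\mathfrak C)}>_R\sigma_{\mathfrak C}$. (ii) If $E_t(\mathfrak C)\neq0$, then $\sigma_{E_t(\mathfrak C)}=\sigma_{\mathfrak C}s_t$ and $\ell(\sigma_{E_t(\mathfrak C)})=\ell(\sigma_{\mathfrak C})-1$; in particular $\sigma_{E_t(\mathfrak C)}<_R\sigma_{\mathfrak C}$.
   Context: $I(d,n)$: $d$-subsets of $\{1,\dots,n\}$ as increasing sequences, ordered by $\underline i\le\underline j$ iff $i_k\le j_k$ for all $k$. Maximal chains $\mathfrak C:\underline i_r>\cdots>\underline i_0$ (from $(n-d+1)\cdots n$ to $12\cdots d$); chains compared lexicographically via concatenated strings $\underline i_r\cdots\underline i_0$; $\mathfrak C_{\mathrm{right}}$ the smallest. Root operators $f_{s,h}$ ($1\le h\le d$, $h\le s<n-d+h$): $f_{s,h}(i_1\cdots i_d)$ replaces $i_h=s$ by $s+1$ if $i_h=s$ and ($h=d$ or $i_{h+1}\ge s+2$), else $0$. Along a maximal chain $\underline i_t=f_{s_t,h_t}(\underline i_{t-1})$, each admissible pair occurring exactly once; $\tilde f_t:=f_{s_t,h_t}$ for $\mathfrak C_{\mathrm{right}}$; $\sigma_{\mathfrak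 C}\in\mathsf S_r$ is defined by: the operator from $\underline i_{t-1}$ to $\underline i_t$ in $\mathfrak C$ is $\tilde f_{\sigma_{\mathfrak C}(t)}$. For $1\le t\le r-1$, the Bruhat interval $[\underline i_{t-1},\underline i_{t+1}]$ has 3 or 4 elements; if 4, say $\{\underline i_{t-1},\underline i_t,\underline i'_t,\underline i_{t+1}\}$, then $\underline i_t$ is a right peak if $\underline i'_t>_{lex}\underline i_t$ and a left peak if $\underline i_t>_{lex}\underline i'_t$. $F_t(\mathfrak C)$ (resp. $E_t(\mathfrak C)$) is the chain obtained by replacing $\underline i_t$ by $\underline i'_t$ if $\underline i_t$ is a right (resp. left) peak, and $0$ otherwise. $s_t=(t,t+1)\in\mathsf S_r$, $\ell$ is Coxeter length on $\mathsf S_r$, and $\le_R$ is the right weak Bruhat order ($u\le_R v$ iff some reduced word of $v$ begins with a reduced word of $u$). *)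

theory Defs
  imports "HOL-Combinatorics.Transposition"
begin

text \<open>A d-subset of {1..n} is represented as its increasing sequence i_1 ... i_d
  (list position k-1 holds i_k).\<close>

definition Idn :: "nat \<Rightarrow> nat \<Rightarrow> nat list set" where
  "Idn d n = {x. length x = d \<and> sorted_wrt (<) x \<and> set x \<subseteq> {1..n}}"

definition ile :: "nat list \<Rightarrow> nat list \<Rightarrow> bool" where
  "ile x y \<longleftrightarrow> length x = length y \<and> (\<forall>k<length x. x ! k \<le> y ! k)"

definition iless :: "nat list \<Rightarrow> nat list \<Rightarrow> bool" where
  "iless x y \<longleftrightarrow> ile x y \<and> x \<noteq> y"

definition covers :: "nat \<Rightarrow> nat \<Rightarrow> nat list \<Rightarrow> nat list \<Rightarrow> bool" where
  "covers d n x y \<longleftrightarrow> x \<in> Idn d n \<and> y \<in> Idn d n \<and> iless x y \<and>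
     \<not> (\<exists>z\<in>Idn d n. iless x z \<and> iless z y)"

definition bottom :: "nat \<Rightarrow> nat list" where
  "bottom d = [1..<d+1]"

definition top :: "nat \<Rightarrow> nat \<Rightarrow> nat list" where
  "top d n = [n-d+1..<n+1]"

text \<open>A maximal chain i_r > ... > i_0 is represented by the list [i_0, ..., i_r]
  (so c ! t = i_t), going from 12...d to (n-d+1)...n by covering relations.\<close>

definition maxchain :: "nat \<Rightarrow> nat \<Rightarrow> nat list list \<Rightarrow> bool" where
  "maxchain d n c \<longleftrightarrow> c \<noteq> [] \<and> hd c = bottom d \<and> last c = top d n \<and>
     (\<forall>t. Suc t < length c \<longrightarrow> covers d n (c ! t) (c ! Suc t))"

definition lex_less :: "nat list \<Rightarrow> nat list \<Rightarrow> bool" where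
  "lex_less xs ys \<longleftrightarrow> (xs, ys) \<in> lexord {(a, b). a < b}"

text \<open>Chains are compared via the concatenated string i_r ... i_0.\<close>

definition chain_word :: "nat list list \<Rightarrow> nat list" where
  "chain_word c = concat (rev c)"

definition C_right :: "nat \<Rightarrow> nat \<Rightarrow> nat list list" where
  "C_right d n = (THE c. maxchain d n c \<and>
      (\<forall>c'. maxchain d n c' \<and> c' \<noteq> c \<longrightarrow> lex_less (chain_word c) (chain_word c')))"

definition admissible :: "nat \<Rightarrow> nat \<Rightarrow> nat \<times> nat \<Rightarrow> bool" where
  "admissible d n p \<longleftrightarrow> (case p of (s, h) \<Rightarrow> 1 \<le> h \<and> h \<le> d \<and> h \<le> s \<and> s < n - d + h)"

text \<open>f_{s,h}; the value 0 is rendered as None.\<close>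

definition froot :: "nat \<Rightarrow> nat \<Rightarrow> nat list \<Rightarrow> nat list option" where
  "froot s h x = (if x ! (h - 1) = s \<and> (h = length x \<or> x ! h \<ge> s + 2)
                  then Some (x[h - 1 := s + 1]) else None)"

definition step_op :: "nat \<Rightarrow> nat \<Rightarrow> nat list list \<Rightarrow> nat \<Rightarrow> nat \<times> nat" where
  "step_op d n c t = (THE p. admissible d n p \<and>
       froot (fst p) (snd p) (c ! (t - 1)) = Some (c ! t))"

definition sigma :: "nat \<Rightarrow> nat \<Rightarrow> nat list list \<Rightarrow> nat \<Rightarrow> nat" where
  "sigma d n c t = (if t \<in> {1..d*(n-d)}
      then (THE u. u \<in> {1..d*(n-d)} \<and> step_op d n (C_right d n) u = step_op d n c t)
      else t)"

definition interval :: "nat \<Rightarrow> nat \<Rightarrow> nat list \<Rightarrow> nat list \<Rightarrow> nat list set" where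
  "interval d n x y = {z \<in> Idn d n. ile x z \<and> ile z y}"

definition other_elt :: "nat \<Rightarrow> nat \<Rightarrow> nat list list \<Rightarrow> nat \<Rightarrow> nat list" where
  "other_elt d n c t = (THE z. z \<in> interval d n (c ! (t-1)) (c ! (t+1)) -
                                 {c ! (t-1), c ! t, c ! (t+1)})"

definition right_peak :: "nat \<Rightarrow> nat \<Rightarrow> nat list list \<Rightarrow> nat \<Rightarrow> bool" where
  "right_peak d n c t \<longleftrightarrow> card (interval d n (c ! (t-1)) (c ! (t+1))) = 4 \<and>
      lex_less (c ! t) (other_elt d n c t)"

definition left_peak :: "nat \<Rightarrow> nat \<Rightarrow> nat list list \<Rightarrow> nat \<Rightarrow> bool" where
  "left_peak d n c t \<longleftrightarrow> card (interval d n (c ! (t-1)) (c ! (t+1))) = 4 \<and>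
      lex_less (other_elt d n c t) (c ! t)"

text \<open>F_t and E_t; the value 0 is rendered as None.\<close>

definition F_op :: "nat \<Rightarrow> nat \<Rightarrow> nat \<Rightarrow> nat list list \<Rightarrow> nat list list option" where
  "F_op d n t c = (if right_peak d n c t then Some (c[t := other_elt d n c t]) else None)"

definition E_op :: "nat \<Rightarrow> nat \<Rightarrow> nat \<Rightarrow> nat list list \<Rightarrow> nat list list option" where
  "E_op d n t c = (if left_peak d n c t then Some (c[t := other_elt d n c t]) else None)"

definition simple_tr :: "nat \<Rightarrow> nat \<Rightarrow> nat" where
  "simple_tr i = Transposition.transpose i (Suc i)"

definition word_prod :: "nat list \<Rightarrow> nat \<Rightarrow> nat" where
  "word_prod ws = foldr (\<lambda>i p. simple_tr i \<circ> p) ws id"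

definition is_word :: "nat \<Rightarrow> (nat \<Rightarrow> nat) \<Rightarrow> nat list \<Rightarrow> bool" where
  "is_word r w ws \<longleftrightarrow> set ws \<subseteq> {1..<r} \<and> word_prod ws = w"

definition coxeter_length :: "nat \<Rightarrow> (nat \<Rightarrow> nat) \<Rightarrow> nat" where
  "coxeter_length r w = (LEAST k. \<exists>ws. is_word r w ws \<and> length ws = k)"

definition reduced_word :: "nat \<Rightarrow> (nat \<Rightarrow> nat) \<Rightarrow> nat list \<Rightarrow> bool" where
  "reduced_word r w ws \<longleftrightarrow> is_word r w ws \<and> length ws = coxeter_length r w"

definition weak_le_R :: "nat \<Rightarrow> (nat \<Rightarrow> nat) \<Rightarrow> (nat \<Rightarrow> nat) \<Rightarrow> bool" where
  "weak_le_R r u v \<longleftrightarrow> (\<exists>as bs. reduced_word r u as \<and> reduced_word r v (as @ bs))"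

definition weak_less_R :: "nat \<Rightarrow> (nat \<Rightarrow> nat) \<Rightarrow> (nat \<Rightarrow> nat) \<Rightarrow> bool" where
  "weak_less_R r u v \<longleftrightarrow> weak_le_R r u v \<and> u \<noteq> v"

end

theory Submission
  imports Defs "HOL-Combinatorics.Permutations"
begin

text \<open>
  Each step of a maximal chain raises a single entry by one and uses a root operator \<open>f_{s,h}\<close>;
  every operator is used exactly once.  The chain \<open>C_right\<close> raises the last entry all the way
  first, then the one before it, and so on, so it uses \<open>f_{s,h}\<close> at step
  \<open>(d - h)(n - d) + (s - h) + 1\<close>; this makes \<open>\<sigma>_C(t)\<close> explicit.  A four-element interval
  \<open>[i_{t-1}, i_{t+1}]\<close> is a square in which two different entries \<open>a\<close> and \<open>b\<close> are raised in either
  order, so replacing \<open>i_t\<close> by \<open>i'_t\<close> swaps the operators used at steps \<open>t\<close> and \<open>t + 1\<close>, i.e.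
  multiplies \<open>\<sigma>_C\<close> by \<open>s_t\<close> on the right.  The peak is a right peak exactly when the entry raised
  first lies further right, i.e. when its operator comes earlier in \<open>C_right\<close>; so \<open>F_t\<close> applies
  to an ascent \<open>\<sigma>_C(t) < \<sigma>_C(t + 1)\<close> and \<open>E_t\<close> to a descent.  Finally the Coxeter length is the
  number of inversions, which right multiplication by \<open>s_t\<close> raises by one at an ascent.
\<close>

section \<open>Coxeter length as the number of inversions\<close>

definition inversions :: "nat \<Rightarrow> (nat \<Rightarrow> nat) \<Rightarrow> (nat \<times> nat) set" where
  "inversions r w = {(p, q). 1 \<le> p \<and> p < q \<and> q \<le> r \<and> w q < w p}"

lemma finite_inversions: "finite (inversions r w)"
proof (rule finite_subset)
  show "inversions r w \<subseteq> {1..r} \<times> {1..r}" by (auto simp: inversions_def)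
qed simp

lemma simple_tr_simps [simp]:
  "simple_tr i i = Suc i" "simple_tr i (Suc i) = i" "simple_tr i (simple_tr i x) = x"
  by (auto simp: simple_tr_def)

lemma simple_tr_other: "p \<noteq> i \<Longrightarrow> p \<noteq> Suc i \<Longrightarrow> simple_tr i p = p"
  by (simp add: simple_tr_def)

lemma simple_tr_permutes: "1 \<le> i \<Longrightarrow> Suc i \<le> r \<Longrightarrow> simple_tr i permutes {1..r}"
  unfolding simple_tr_def by (rule permutes_swap_id) auto

lemma simple_tr_less:
  assumes "p < q" "(p, q) \<noteq> (i, Suc i)"
  shows "simple_tr i p < simple_tr i q"
  using assms by (auto simp: simple_tr_def Transposition.transpose_def)

lemma inversions_comp_simple_tr_image:
  assumes "1 \<le> i" "Suc i \<le> r"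
  shows "map_prod (simple_tr i) (simple_tr i) ` (inversions r w - {(i, Suc i)})
           \<subseteq> inversions r (w \<circ> simple_tr i) - {(i, Suc i)}"
proof (rule image_subsetI)
  fix x assume x: "x \<in> inversions r w - {(i, Suc i)}"
  obtain p q where x_eq: "x = (p, q)" by fastforce
  from x have pq: "1 \<le> p" "p < q" "q \<le> r" "w q < w p" "(p, q) \<noteq> (i, Suc i)"
    unfolding x_eq by (auto simp: inversions_def)
  let ?s = "simple_tr i"
  have "?s p < ?s q" using simple_tr_less[OF pq(2,5)] .
  moreover have "?s p \<in> {1..r}" "?s q \<in> {1..r}"
    using pq permutes_in_image[OF simple_tr_permutes[OF assms]] by simp_all
  moreover have "(?s p, ?s q) \<noteq> (i, Suc i)"
  proof
    assume "(?s p, ?s q) = (i, Suc i)"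
    then have "p = ?s i" "q = ?s (Suc i)" by (metis prod.inject simple_tr_simps(3))+
    with pq(2) show False by simp
  qed
  ultimately show "map_prod ?s ?s x \<in> inversions r (w \<circ> ?s) - {(i, Suc i)}"
    using pq(4) x_eq by (auto simp: inversions_def)
qed

lemma card_inversions_comp_simple_tr:
  assumes "1 \<le> i" "Suc i \<le> r"
  shows "card (inversions r (w \<circ> simple_tr i)) + (if w (Suc i) < w i then 1 else 0)
       = card (inversions r w) + (if w i < w (Suc i) then 1 else 0)"
proof -
  let ?s = "simple_tr i" and ?e = "(i, Suc i)"
  let ?g = "map_prod ?s ?s"
  have "bij_betw ?g (inversions r w - {?e}) (inversions r (w \<circ> ?s) - {?e})"
  proof (rule bij_betw_byWitness[where f' = ?g])
    show "?g ` (inversions r w - {?e}) \<subseteq> inversions r (w \<circ> ?s) - {?e}"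
      by (rule inversions_comp_simple_tr_image[OF assms])
    show "?g ` (inversions r (w \<circ> ?s) - {?e}) \<subseteq> inversions r w - {?e}"
      using inversions_comp_simple_tr_image[OF assms, of "w \<circ> ?s"] by (simp add: comp_def)
  qed auto
  then have same: "card (inversions r w - {?e}) = card (inversions r (w \<circ> ?s) - {?e})"
    by (rule bij_betw_same_card)
  have "card (inversions r v) = card (inversions r v - {?e}) + (if v (Suc i) < v i then 1 else 0)"
    for v
  proof -
    have "?e \<in> inversions r v \<longleftrightarrow> v (Suc i) < v i"
      using assms by (simp add: inversions_def)
    then show ?thesis
      using card.remove[OF finite_inversions, of ?e r v] by (simp add: card_Diff_singleton_if)
  qed
  from this[of w] this[of "w \<circ> ?s"] same show ?thesis by simp
qed

lemma word_prod_append: "word_prod (xs @ ys) = word_prod xs \<circ> word_prod ys"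
proof -
  have "foldr (\<lambda>i p. simple_tr i \<circ> p) xs q = word_prod xs \<circ> q" for q
    unfolding word_prod_def by (induction xs) auto
  then show ?thesis by (simp add: word_prod_def)
qed

lemma word_prod_snoc: "word_prod (xs @ [i]) = word_prod xs \<circ> simple_tr i"
proof -
  have "word_prod [i] = simple_tr i" by (simp add: word_prod_def)
  then show ?thesis by (simp add: word_prod_append)
qed

lemma card_inversions_word_prod_le:
  assumes "set ws \<subseteq> {1..<r}"
  shows "card (inversions r (word_prod ws)) \<le> length ws"
  using assms
proof (induction ws rule: rev_induct)
  case Nil
  have "inversions r (word_prod []) = {}" by (auto simp: inversions_def word_prod_def)
  then show ?case by simp
next
  case (snoc i ws)
  then have i: "1 \<le> i" "Suc i \<le> r" and IH: "card (inversions r (word_prod ws)) \<le> length ws"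
    by auto
  then have "card (inversions r (word_prod ws \<circ> simple_tr i)) \<le> card (inversions r (word_prod ws)) + 1"
    using card_inversions_comp_simple_tr[of i r "word_prod ws"] by (simp split: if_splits)
  with IH show ?case unfolding word_prod_snoc length_append_singleton by linarith
qed

lemma permutes_ascending_eq_id:
  assumes w: "w permutes {1..r}" and asc: "\<And>i. 1 \<le> i \<Longrightarrow> Suc i \<le> r \<Longrightarrow> w i < w (Suc i)"
  shows "w = id"
proof -
  let ?xs = "map w [1..<Suc r]"
  have "sorted ?xs"
    unfolding sorted_iff_nth_Suc using asc by (auto simp: nth_upt less_imp_le simp del: upt_Suc)
  moreover have "distinct ?xs"
    using permutes_inj_on[OF w] by (simp add: distinct_map inj_on_subset)
  moreover have "set ?xs = set [1..<Suc r]"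
    using permutes_image[OF w] by (simp only: set_map set_upt atLeastLessThanSuc_atLeastAtMost)
  ultimately have xs: "?xs = [1..<Suc r]" by (intro sorted_distinct_set_unique) (simp_all del: upt_Suc)
  show ?thesis
  proof
    fix x show "w x = id x"
    proof (cases "x \<in> {1..r}")
      case True
      then have "?xs ! (x - 1) = [1..<Suc r] ! (x - 1)" using xs by simp
      moreover have "x - 1 < length [1..<Suc r]" using True by auto
      ultimately show ?thesis using True by (simp del: upt_Suc)
    qed (simp add: permutes_not_in[OF w])
  qed
qed

lemma permutes_descent:
  assumes "w permutes {1..r}" "w \<noteq> id"
  obtains i where "1 \<le> i" "Suc i \<le> r" "w (Suc i) < w i"
proof -
  obtain i where i: "1 \<le> i" "Suc i \<le> r" "\<not> w i < w (Suc i)"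
    using permutes_ascending_eq_id[OF assms(1)] assms(2) by blast
  moreover have "w i \<noteq> w (Suc i)"
    using permutes_inj[OF assms(1)] by (metis injD n_not_Suc_n)
  ultimately show ?thesis using that by simp
qed

text \<open>Bubble sort: undoing a descent removes exactly one inversion.\<close>

lemma exists_word_length_inversions:
  assumes "w permutes {1..r}"
  shows "\<exists>ws. is_word r w ws \<and> length ws = card (inversions r w)"
  using assms
proof (induction "card (inversions r w)" arbitrary: w)
  case 0
  have "w = id"
  proof (rule ccontr)
    assume "w \<noteq> id"
    then obtain i where "1 \<le> i" "Suc i \<le> r" "w (Suc i) < w i"
      using permutes_descent[OF 0(2)] by blast
    then have "(i, Suc i) \<in> inversions r w" by (simp add: inversions_def)
    then show False using 0(1) finite_inversions by (metis card_0_eq empty_iff)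
  qed
  then show ?case using 0(1) by (intro exI[of _ "[]"]) (simp add: is_word_def word_prod_def id_def)
next
  case (Suc k)
  have "w \<noteq> id"
  proof
    assume "w = id"
    then have "inversions r w = {}" by (auto simp: inversions_def)
    with Suc(2) show False by simp
  qed
  then obtain i where i: "1 \<le> i" "Suc i \<le> r" "w (Suc i) < w i"
    using permutes_descent[OF Suc(3)] by blast
  let ?w' = "w \<circ> simple_tr i"
  have "k = card (inversions r ?w')"
    using card_inversions_comp_simple_tr[OF i(1,2), of w] i(3) Suc(2) by simp
  moreover have "?w' permutes {1..r}"
    using permutes_compose[OF simple_tr_permutes[OF i(1,2)] Suc(3)] .
  ultimately obtain ws where ws: "is_word r ?w' ws" "length ws = k"
    using Suc(1) by metis
  have "is_word r w (ws @ [i])"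
    using ws(1) i by (auto simp: is_word_def word_prod_snoc comp_assoc)
  then show ?case using ws(2) Suc(2) by auto
qed

lemma coxeter_length_eq_card_inversions:
  assumes "w permutes {1..r}"
  shows "coxeter_length r w = card (inversions r w)"
  unfolding coxeter_length_def
proof (rule Least_equality)
  show "\<exists>ws. is_word r w ws \<and> length ws = card (inversions r w)"
    using exists_word_length_inversions[OF assms] .
  fix k assume "\<exists>ws. is_word r w ws \<and> length ws = k"
  then show "card (inversions r w) \<le> k"
    using card_inversions_word_prod_le by (auto simp: is_word_def)
qed

lemma coxeter_length_comp_simple_tr_ascent:
  assumes w: "w permutes {1..r}" and i: "1 \<le> i" "Suc i \<le> r" and asc: "w i < w (Suc i)"
  shows "coxeter_length r (w \<circ> simple_tr i) = coxeter_length r w + 1"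
    and "weak_less_R r w (w \<circ> simple_tr i)"
proof -
  have w': "w \<circ> simple_tr i permutes {1..r}"
    using permutes_compose[OF simple_tr_permutes[OF i] w] .
  have card: "card (inversions r (w \<circ> simple_tr i)) = card (inversions r w) + 1"
    using card_inversions_comp_simple_tr[OF i, of w] asc by simp
  show len: "coxeter_length r (w \<circ> simple_tr i) = coxeter_length r w + 1"
    using card coxeter_length_eq_card_inversions[OF w] coxeter_length_eq_card_inversions[OF w']
    by simp
  obtain ws where ws: "is_word r w ws" "length ws = card (inversions r w)"
    using exists_word_length_inversions[OF w] by blast
  have "reduced_word r w ws"
    using ws coxeter_length_eq_card_inversions[OF w] by (simp add: reduced_word_def)
  moreover have "reduced_word r (w \<circ> simple_tr i) (ws @ [i])"
    using ws i card coxeter_length_eq_card_inversions[OF w']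
    by (auto simp: reduced_word_def is_word_def word_prod_snoc)
  moreover have "w \<noteq> w \<circ> simple_tr i" using len by auto
  ultimately show "weak_less_R r w (w \<circ> simple_tr i)"
    unfolding weak_less_R_def weak_le_R_def by blast
qed

lemma coxeter_length_comp_simple_tr_descent:
  assumes w: "w permutes {1..r}" and i: "1 \<le> i" "Suc i \<le> r" and desc: "w (Suc i) < w i"
  shows "coxeter_length r (w \<circ> simple_tr i) + 1 = coxeter_length r w"
    and "weak_less_R r (w \<circ> simple_tr i) w"
proof -
  let ?w' = "w \<circ> simple_tr i"
  have w': "?w' permutes {1..r}"
    using permutes_compose[OF simple_tr_permutes[OF i] w] .
  have "?w' i < ?w' (Suc i)" using desc by simp
  moreover have "?w' \<circ> simple_tr i = w" by (simp add: fun_eq_iff)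
  ultimately show "coxeter_length r ?w' + 1 = coxeter_length r w" "weak_less_R r ?w' w"
    using coxeter_length_comp_simple_tr_ascent[OF w' i] by metis+
qed

definition raise_at :: "nat list \<Rightarrow> nat \<Rightarrow> nat list" where
  "raise_at x j = x[j := Suc (x ! j)]"

lemma length_raise_at [simp]: "length (raise_at x j) = length x"
  by (simp add: raise_at_def)

lemma nth_raise_at: "j < length x \<Longrightarrow> raise_at x j ! i = (if i = j then Suc (x ! j) else x ! i)"
  by (simp add: raise_at_def)

lemma raise_at_neq: "j < length x \<Longrightarrow> raise_at x j \<noteq> x"
  by (metis nth_raise_at n_not_Suc_n)

lemma raise_at_eq_iff:
  "j < length x \<Longrightarrow> length x = length y \<Longrightarrow> raise_at x j = raise_at y j \<longleftrightarrow> x = y"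
  by (metis list_update_id list_update_overwrite nth_list_update_eq old.nat.inject raise_at_def)

lemma raise_at_commute:
  "a < length x \<Longrightarrow> b < length x \<Longrightarrow> raise_at (raise_at x a) b = raise_at (raise_at x b) a"
  by (rule nth_equalityI) (auto simp: nth_raise_at)

lemma Idn_length: "x \<in> Idn d n \<Longrightarrow> length x = d"
  by (simp add: Idn_def)

lemma Idn_nth_less: "x \<in> Idn d n \<Longrightarrow> i < j \<Longrightarrow> j < d \<Longrightarrow> x ! i < x ! j"
  unfolding Idn_def by (auto intro: sorted_wrt_nth_less)

lemma Idn_nth_range: "x \<in> Idn d n \<Longrightarrow> i < d \<Longrightarrow> 1 \<le> x ! i \<and> x ! i \<le> n"
  unfolding Idn_def using nth_mem by fastforce

lemma Idn_nth_gap: "x \<in> Idn d n \<Longrightarrow> i \<le> j \<Longrightarrow> j < d \<Longrightarrow> x ! i + (j - i) \<le> x ! j"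
proof (induction j)
  case (Suc j)
  then show ?case
    using Idn_nth_less[OF Suc.prems(1), of j "Suc j"] by (cases "i = Suc j") auto
qed simp

lemma Idn_nth_lower: "x \<in> Idn d n \<Longrightarrow> i < d \<Longrightarrow> Suc i \<le> x ! i"
  using Idn_nth_gap[of x d n 0 i] Idn_nth_range[of x d n 0] by simp

lemma Idn_nth_upper:
  assumes "x \<in> Idn d n" "i < d"
  shows "x ! i + d \<le> n + Suc i"
proof -
  have "x ! i + (d - 1 - i) \<le> x ! (d - 1)" using Idn_nth_gap[OF assms(1), of i "d - 1"] assms(2) by simp
  moreover have "x ! (d - 1) \<le> n" using Idn_nth_range[OF assms(1), of "d - 1"] assms(2) by simp
  ultimately show ?thesis using assms(2) by simp
qed

lemma IdnI:
  assumes "length x = d" "\<And>i. Suc i < d \<Longrightarrow> x ! i < x ! Suc i"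
    "\<And>i. i < d \<Longrightarrow> 1 \<le> x ! i \<and> x ! i \<le> n"
  shows "x \<in> Idn d n"
proof -
  have "sorted_wrt (<) x"
    using sorted_wrt_iff_nth_Suc_transp[OF transp_on_less] assms(1,2) by auto
  moreover have "set x \<subseteq> {1..n}"
    using assms(1,3) by (auto simp: in_set_conv_nth)
  ultimately show ?thesis using assms(1) by (simp add: Idn_def)
qed

lemma ile_refl: "ile x x"
  by (simp add: ile_def)

lemma ile_trans: "ile x y \<Longrightarrow> ile y z \<Longrightarrow> ile x z"
  unfolding ile_def by (metis le_trans)

lemma ile_raise_at: "j < length x \<Longrightarrow> ile x (raise_at x j)"
  by (simp add: ile_def nth_raise_at)

lemma sum_list_less_if_iless:
  assumes "ile x z" "x \<noteq> z"
  shows "sum_list x < sum_list z"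
proof -
  have len: "length x = length z" and le: "\<forall>i\<in>{0..<length x}. x ! i \<le> z ! i"
    using assms(1) by (auto simp: ile_def)
  moreover obtain i where "i < length x" "x ! i \<noteq> z ! i"
    using assms(2) len nth_equalityI by blast
  ultimately have "(\<Sum>i=0..<length x. x ! i) < (\<Sum>i=0..<length x. z ! i)"
    by (intro sum_strict_mono_ex1) force+
  then show ?thesis by (simp add: sum_list_sum_nth len)
qed

lemma sum_list_raise_at: "j < length x \<Longrightarrow> sum_list (raise_at x j) = Suc (sum_list x)"
  using elem_le_sum_list[of j x] by (simp add: raise_at_def sum_list_update)

lemma ile_imp_sum_list_le: "ile x z \<Longrightarrow> sum_list x \<le> sum_list z"
  using sum_list_less_if_iless by (cases "x = z") (auto intro: less_imp_le)

lemma ile_raise_at_if_less: "ile x z \<Longrightarrow> j < length x \<Longrightarrow> x ! j < z ! j \<Longrightarrow> ile (raise_at x j) z"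
  by (auto simp: ile_def nth_raise_at)

lemma covers_raise_at:
  assumes "x \<in> Idn d n" "raise_at x j \<in> Idn d n" "j < d"
  shows "covers d n x (raise_at x j)"
proof -
  have j: "j < length x" using assms Idn_length by auto
  have "\<not> (iless x z \<and> iless z (raise_at x j))" for z
  proof
    assume "iless x z \<and> iless z (raise_at x j)"
    then have "sum_list x < sum_list z" "sum_list z < sum_list (raise_at x j)"
      using sum_list_less_if_iless by (auto simp: iless_def)
    with sum_list_raise_at[OF j] show False by simp
  qed
  then show ?thesis
    using assms ile_raise_at[OF j] raise_at_neq[OF j] by (auto simp: covers_def iless_def)
qed

lemma obtain_last_difference:
  assumes "length xs = length ys" "xs \<noteq> ys"
  obtains k where "k < length xs" "xs ! k \<noteq> ys ! k"
    "\<And>i. k < i \<Longrightarrow> i < length xs \<Longrightarrow> xs ! i = ys ! i"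
proof -
  define D where "D = {k. k < length xs \<and> xs ! k \<noteq> ys ! k}"
  have "finite D" by (simp add: D_def)
  moreover have "D \<noteq> {}" using assms nth_equalityI[of xs ys] by (auto simp: D_def)
  ultimately have "Max D \<in> D" "\<And>i. i \<in> D \<Longrightarrow> i \<le> Max D" by simp_all
  then show ?thesis
    using that[of "Max D"] unfolding D_def by (metis (mono_tags, lifting) mem_Collect_eq not_le)
qed

lemma raise_at_last_difference_in_Idn:
  assumes x: "x \<in> Idn d n" and y: "y \<in> Idn d n"
    and j: "j < d" "x ! j < y ! j" and above: "\<And>i. j < i \<Longrightarrow> i < d \<Longrightarrow> x ! i = y ! i"
  shows "raise_at x j \<in> Idn d n"
proof (rule IdnI)
  have jl: "j < length x" using j Idn_length[OF x] by simp
  fix i assume i: "Suc i < d"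
  show "raise_at x j ! i < raise_at x j ! Suc i"
  proof (cases "i = j")
    case True
    have "Suc (x ! j) \<le> y ! j" using j by simp
    also have "y ! j < y ! Suc j" using Idn_nth_less[OF y, of j "Suc j"] i True by simp
    also have "y ! Suc j = x ! Suc j" using above[of "Suc j"] i True by simp
    finally show ?thesis using True jl by (simp add: nth_raise_at)
  next
    case False
    then show ?thesis using Idn_nth_less[OF x, of i "Suc i"] i jl by (auto simp: nth_raise_at)
  qed
next
  have jl: "j < length x" using j Idn_length[OF x] by simp
  fix i assume "i < d"
  then show "1 \<le> raise_at x j ! i \<and> raise_at x j ! i \<le> n"
    using Idn_nth_range[OF x] Idn_nth_range[OF y, of j] j jl by (auto simp: nth_raise_at)
qed (use Idn_length[OF x] in simp)

text \<open>Raising the last entry in which \<open>x\<close> and \<open>y\<close> differ gives an element between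
  them, so a cover raises exactly one entry by one.\<close>

lemma covers_imp_raise_at:
  assumes "covers d n x y"
  obtains j where "j < d" "y = raise_at x j"
proof -
  have x: "x \<in> Idn d n" and y: "y \<in> Idn d n" and xy: "ile x y" "x \<noteq> y"
    and no_between: "\<And>z. z \<in> Idn d n \<Longrightarrow> \<not> (iless x z \<and> iless z y)"
    using assms by (auto simp: covers_def iless_def)
  have lx: "length x = d" and ly: "length y = d" using x y Idn_length by auto
  have le: "x ! i \<le> y ! i" if "i < d" for i using xy(1) that lx by (simp add: ile_def)
  obtain j where j: "j < d" "x ! j \<noteq> y ! j" and above: "\<And>i. j < i \<Longrightarrow> i < d \<Longrightarrow> x ! i = y ! i"
    using obtain_last_difference[of x y] xy(2) lx ly by auto
  with le have j_less: "x ! j < y ! j" by (simp add: order_le_neq_trans)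
  have jl: "j < length x" using j lx by simp
  have "raise_at x j \<in> Idn d n"
    using raise_at_last_difference_in_Idn[OF x y j(1) j_less above] .
  moreover have "ile (raise_at x j) y" using le j_less lx ly jl by (auto simp: ile_def nth_raise_at)
  moreover have "iless x (raise_at x j)"
    using ile_raise_at[OF jl] raise_at_neq[OF jl] by (simp add: iless_def)
  ultimately have "raise_at x j = y" using no_between by (auto simp: iless_def)
  with j(1) that show ?thesis by blast
qed

lemma lex_lessI:
  assumes "length x = length y" "i < length x" "\<And>l. l < i \<Longrightarrow> x ! l = y ! l" "x ! i < y ! i"
  shows "lex_less x y"
proof -
  have "take i x = take i y" by (rule nth_equalityI) (use assms in auto)
  with assms show ?thesis by (auto simp: lex_less_def lexord_take_index_conv)
qed

lemma lex_less_asym: "lex_less x y \<Longrightarrow> \<not> lex_less y x"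
  using lexord_asymmetric[of "{(a, b). a < (b::nat)}"] by (auto simp: lex_less_def asym_on_def)

lemma lex_less_if_raise_at_eq:
  assumes "raise_at z a = raise_at x b" "a < b" "b < length x" "length z = length x"
  shows "lex_less z x"
proof (rule lex_lessI[of _ _ a])
  have "raise_at z a ! l = raise_at x b ! l" for l using assms(1) by simp
  then have eq: "(if l = a then Suc (z ! a) else z ! l) = (if l = b then Suc (x ! b) else x ! l)" for l
    using assms(2-4) by (simp add: nth_raise_at)
  from eq[of a] assms(2) show "z ! a < x ! a" by simp
  fix l assume "l < a"
  with eq[of l] assms(2) show "z ! l = x ! l" by simp
qed (use assms in simp_all)

lemma lex_less_raise_at_iff:
  assumes "a < length x" "b < length x" "a \<noteq> b"
  shows "lex_less (raise_at x a) (raise_at x b) \<longleftrightarrow> b < a"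
proof -
  have "lex_less (raise_at x a) (raise_at x b)" if "b < a" "a < length x" for a b
    using that assms raise_at_commute[of a x b]
    by (intro lex_less_if_raise_at_eq[of _ b _ a]) simp_all
  with assms show ?thesis by (metis lex_less_asym linorder_neqE_nat)
qed

lemma lex_less_concat:
  assumes "length P = length Q" "k < length P" "take k P = take k Q"
    "lex_less (P ! k) (Q ! k)" "length (Q ! k) \<le> length (P ! k)"
  shows "lex_less (concat P) (concat Q)"
proof -
  have "(P ! k @ concat (drop (Suc k) P), Q ! k @ concat (drop (Suc k) Q)) \<in> lexord {(a, b). a < b}"
    using assms(4,5) lexord_sufI unfolding lex_less_def by blast
  then have "(concat (take k P) @ P ! k @ concat (drop (Suc k) P),
              concat (take k Q) @ Q ! k @ concat (drop (Suc k) Q)) \<in> lexord {(a, b). a < b}"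
    using assms(3) lexord_append_leftI by metis
  moreover have "P = take k P @ P ! k # drop (Suc k) P" "Q = take k Q @ Q ! k # drop (Suc k) Q"
    using assms(1,2) by (simp_all add: id_take_nth_drop)
  ultimately show ?thesis unfolding lex_less_def by (metis concat.simps(2) concat_append)
qed

lemma nth_bottom: "i < d \<Longrightarrow> bottom d ! i = Suc i"
  by (simp add: bottom_def nth_upt del: upt_Suc)

lemma nth_top: "i < d \<Longrightarrow> d \<le> n \<Longrightarrow> top d n ! i = n - d + Suc i"
  by (simp add: top_def nth_upt del: upt_Suc)

lemma length_bottom [simp]: "length (bottom d) = d"
  by (simp add: bottom_def del: upt_Suc)

lemma length_top: "d \<le> n \<Longrightarrow> length (top d n) = d"
  by (simp add: top_def del: upt_Suc)

lemma bottom_in_Idn: "d \<le> n \<Longrightarrow> bottom d \<in> Idn d n"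
  by (rule IdnI) (auto simp: nth_bottom)

lemma sum_list_top:
  assumes "d \<le> n"
  shows "sum_list (top d n) = sum_list (bottom d) + d * (n - d)"
proof -
  have "sum_list (top d n) = (\<Sum>i=0..<d. bottom d ! i + (n - d))"
    using assms by (auto simp: sum_list_sum_nth length_top nth_top nth_bottom intro: sum.cong)
  also have "\<dots> = sum_list (bottom d) + d * (n - d)"
    by (simp add: sum.distrib sum_list_sum_nth)
  finally show ?thesis .
qed

lemma maxchain_covers: "maxchain d n c \<Longrightarrow> Suc t < length c \<Longrightarrow> covers d n (c ! t) (c ! Suc t)"
  by (simp add: maxchain_def)

lemma maxchain_nth_0: "maxchain d n c \<Longrightarrow> c ! 0 = bottom d"
  unfolding maxchain_def by (metis hd_conv_nth)

lemma maxchain_nth_last: "maxchain d n c \<Longrightarrow> c ! (length c - 1) = top d n"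
  unfolding maxchain_def by (metis last_conv_nth)

lemma maxchain_nth_in_Idn:
  assumes "maxchain d n c" "d \<le> n" "t < length c"
  shows "c ! t \<in> Idn d n"
proof (cases t)
  case 0
  then show ?thesis using maxchain_nth_0[OF assms(1)] bottom_in_Idn[OF assms(2)] by simp
next
  case (Suc t')
  then show ?thesis using maxchain_covers[OF assms(1), of t'] assms(3) by (simp add: covers_def)
qed

lemma maxchain_step:
  assumes "maxchain d n c" "Suc t < length c"
  obtains j where "j < d" "c ! Suc t = raise_at (c ! t) j"
  using covers_imp_raise_at[OF maxchain_covers[OF assms]] by blast

lemma maxchain_sum_list:
  assumes "maxchain d n c" "d \<le> n" "t < length c"
  shows "sum_list (c ! t) = sum_list (bottom d) + t"
  using assms(3)
proof (induction t)
  case 0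
  then show ?case using maxchain_nth_0[OF assms(1)] by simp
next
  case (Suc t)
  obtain j where "j < d" "c ! Suc t = raise_at (c ! t) j"
    using maxchain_step[OF assms(1) Suc.prems] .
  moreover have "length (c ! t) = d"
    using maxchain_nth_in_Idn[OF assms(1,2), of t] Suc.prems Idn_length by simp
  ultimately show ?case using Suc sum_list_raise_at[of j "c ! t"] by simp
qed

lemma maxchain_length:
  assumes "maxchain d n c" "d \<le> n"
  shows "length c = Suc (d * (n - d))"
proof -
  have "length c > 0" using assms(1) by (simp add: maxchain_def)
  then show ?thesis
    using maxchain_sum_list[OF assms, of "length c - 1"] maxchain_nth_last[OF assms(1)]
      sum_list_top[OF assms(2)] by simp
qed

lemma maxchain_ile:
  assumes "maxchain d n c" "d \<le> n" "i \<le> j" "j < length c"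
  shows "ile (c ! i) (c ! j)"
  using assms(3,4)
proof (induction j)
  case 0
  then show ?case by (simp add: ile_refl)
next
  case (Suc j)
  show ?case
  proof (cases "i = Suc j")
    case False
    obtain a where "a < d" "c ! Suc j = raise_at (c ! j) a"
      using maxchain_step[OF assms(1) Suc.prems(2)] .
    moreover have "length (c ! j) = d"
      using maxchain_nth_in_Idn[OF assms(1,2), of j] Suc.prems Idn_length by simp
    moreover have "ile (c ! i) (c ! j)" using Suc False by simp
    ultimately show ?thesis using ile_trans ile_raise_at by metis
  qed (simp add: ile_refl)
qed

lemma admissible_raise_at:
  assumes "x \<in> Idn d n" "raise_at x j \<in> Idn d n" "j < d"
  shows "admissible d n (x ! j, Suc j)"
proof -
  have "Suc j \<le> x ! j" using Idn_nth_lower[OF assms(1,3)] .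
  moreover have "raise_at x j ! j + d \<le> n + Suc j" using Idn_nth_upper[OF assms(2,3)] .
  ultimately show ?thesis
    using assms(3) Idn_length[OF assms(1)] by (simp add: admissible_def nth_raise_at)
qed

lemma froot_eq_Some_iff: "froot s h x = Some y \<longleftrightarrow>
    x ! (h - 1) = s \<and> (h = length x \<or> x ! h \<ge> s + 2) \<and> y = raise_at x (h - 1)"
  by (auto simp: froot_def raise_at_def)

lemma step_op_raise_at:
  assumes "x \<in> Idn d n" "raise_at x j \<in> Idn d n" "j < d"
    and "c ! (u - 1) = x" "c ! u = raise_at x j"
  shows "step_op d n c u = (x ! j, Suc j)"
  unfolding step_op_def
proof (rule the_equality)
  have jl: "j < length x" using assms Idn_length by auto
  have "Suc j = length x \<or> x ! j + 2 \<le> x ! Suc j"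
  proof (cases "Suc j < d")
    case True
    then show ?thesis using Idn_nth_less[OF assms(2), of j "Suc j"] jl by (simp add: nth_raise_at)
  qed (use assms(3) jl Idn_length[OF assms(1)] in simp)
  then show "admissible d n (x ! j, Suc j) \<and>
      froot (fst (x ! j, Suc j)) (snd (x ! j, Suc j)) (c ! (u - 1)) = Some (c ! u)"
    using admissible_raise_at[OF assms(1-3)] assms(4,5) by (simp add: froot_eq_Some_iff)
next
  fix p assume p: "admissible d n p \<and> froot (fst p) (snd p) (c ! (u - 1)) = Some (c ! u)"
  obtain s h where sh: "p = (s, h)" by fastforce
  with p have "1 \<le> h" "x ! (h - 1) = s" "raise_at x (h - 1) = raise_at x j"
    using assms(4,5) by (auto simp: admissible_def froot_eq_Some_iff)
  moreover have "h - 1 = j"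
  proof (rule ccontr)
    assume "h - 1 \<noteq> j"
    then have "raise_at x (h - 1) ! j = x ! j" by (simp add: raise_at_def)
    moreover have "raise_at x j ! j = Suc (x ! j)"
      using assms(1,3) by (simp add: Idn_length nth_raise_at)
    ultimately show False using \<open>raise_at x (h - 1) = raise_at x j\<close> by simp
  qed
  ultimately show "p = (x ! j, Suc j)" using sh by auto
qed

lemma maxchain_step_op:
  assumes "maxchain d n c" "d < n" "1 \<le> t" "t < length c"
  obtains a where "a < d" "c ! t = raise_at (c ! (t - 1)) a"
    "step_op d n c t = (c ! (t - 1) ! a, Suc a)" "admissible d n (c ! (t - 1) ! a, Suc a)"
proof -
  obtain a where a: "a < d" "c ! t = raise_at (c ! (t - 1)) a"
    using maxchain_step[OF assms(1), of "t - 1"] assms(3,4) by auto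
  have x: "c ! (t - 1) \<in> Idn d n" and y: "raise_at (c ! (t - 1)) a \<in> Idn d n"
    using maxchain_nth_in_Idn[OF assms(1)] assms a(2) by (metis less_imp_le_nat less_imp_diff_less)+
  show ?thesis
    by (rule that[OF a step_op_raise_at[OF x y a(1) refl a(2)] admissible_raise_at[OF x y a(1)]])
qed

section \<open>The chain \<open>C_right\<close>\<close>

text \<open>The \<open>u\<close>-th element of \<open>C_right\<close>, with \<open>m = n - d\<close>.\<close>

definition right_chain_elt :: "nat \<Rightarrow> nat \<Rightarrow> nat \<Rightarrow> nat list" where
  "right_chain_elt d m u = map (\<lambda>i. Suc i + min m (u - (d - Suc i) * m)) [0..<d]"

definition right_chain :: "nat \<Rightarrow> nat \<Rightarrow> nat list list" where
  "right_chain d m = map (right_chain_elt d m) [0..<Suc (d * m)]"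

definition right_chain_pos :: "nat \<Rightarrow> nat \<Rightarrow> nat \<times> nat \<Rightarrow> nat" where
  "right_chain_pos d m p = (d - snd p) * m + (fst p - snd p) + 1"

lemma length_right_chain_elt [simp]: "length (right_chain_elt d m u) = d"
  by (simp add: right_chain_elt_def)

lemma nth_right_chain_elt:
  "i < d \<Longrightarrow> right_chain_elt d m u ! i = Suc i + min m (u - (d - Suc i) * m)"
  by (simp add: right_chain_elt_def)

lemma right_chain_elt_in_Idn: "right_chain_elt d m u \<in> Idn d (d + m)"
proof (rule IdnI)
  fix i assume i: "Suc i < d"
  have "(d - Suc (Suc i)) * m \<le> (d - Suc i) * m" by (intro mult_le_mono1) simp
  then have "u - (d - Suc i) * m \<le> u - (d - Suc (Suc i)) * m" by (rule diff_le_mono2)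
  then have "min m (u - (d - Suc i) * m) \<le> min m (u - (d - Suc (Suc i)) * m)"
    by (rule min.mono[OF order.refl])
  with i show "right_chain_elt d m u ! i < right_chain_elt d m u ! Suc i"
    unfolding nth_right_chain_elt[OF Suc_lessD[OF i]] nth_right_chain_elt[OF i] by linarith
qed (simp_all add: nth_right_chain_elt)

lemma right_chain_elt_0: "right_chain_elt d m 0 = bottom d"
  by (rule nth_equalityI) (auto simp: nth_right_chain_elt nth_bottom)

lemma right_chain_elt_last: "right_chain_elt d m (d * m) = top d (d + m)"
proof (rule nth_equalityI)
  fix i assume "i < length (right_chain_elt d m (d * m))"
  then have i: "i < d" by simp
  have "(d - Suc i) * m + m = (d - i) * m" using i by (simp add: Suc_diff_Suc[symmetric])
  also have "\<dots> \<le> d * m" by simp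
  finally have "m \<le> d * m - (d - Suc i) * m" by simp
  with i show "right_chain_elt d m (d * m) ! i = top d (d + m) ! i"
    by (simp add: nth_right_chain_elt nth_top)
qed (simp add: length_top)

text \<open>Write \<open>u = q m + \<rho>\<close>: after \<open>u\<close> steps of \<open>C_right\<close> the entry of block \<open>k\<close> has been raised
  fully, by \<open>\<rho>\<close>, or not at all according as \<open>k < q\<close>, \<open>k = q\<close>, \<open>k > q\<close>.\<close>

lemma min_diff_mult_cases:
  assumes u: "u = q * m + \<rho>" and \<rho>: "\<rho> < m"
  shows "k = q \<Longrightarrow> min m (u - k * m) = \<rho> \<and> min m (Suc u - k * m) = Suc \<rho>"
    and "k < q \<Longrightarrow> min m (u - k * m) = m \<and> min m (Suc u - k * m) = m"
    and "q < k \<Longrightarrow> min m (u - k * m) = 0 \<and> min m (Suc u - k * m) = 0"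
proof -
  assume "k = q"
  then show "min m (u - k * m) = \<rho> \<and> min m (Suc u - k * m) = Suc \<rho>" using u \<rho> by simp
next
  assume "k < q"
  then have "Suc k * m \<le> q * m" by (intro mult_le_mono1) simp
  then show "min m (u - k * m) = m \<and> min m (Suc u - k * m) = m" using u by simp
next
  assume "q < k"
  then have "Suc q * m \<le> k * m" by (intro mult_le_mono1) simp
  then show "min m (u - k * m) = 0 \<and> min m (Suc u - k * m) = 0" using u \<rho> by simp
qed

lemma right_chain_elt_Suc:
  assumes "u < d * m"
  defines "j \<equiv> d - Suc (u div m)"
  shows "j < d"
    and "right_chain_elt d m (Suc u) = raise_at (right_chain_elt d m u) j"
    and "right_chain_elt d m u ! j = Suc j + u mod m"
    and "\<And>i. i < j \<Longrightarrow> right_chain_elt d m (Suc u) ! i = Suc i"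
proof -
  have "m > 0" using assms(1) by (cases m) auto
  then have cases: "k = u div m \<Longrightarrow> min m (u - k * m) = u mod m \<and> min m (Suc u - k * m) = Suc (u mod m)"
      "k < u div m \<Longrightarrow> min m (u - k * m) = m \<and> min m (Suc u - k * m) = m"
      "u div m < k \<Longrightarrow> min m (u - k * m) = 0 \<and> min m (Suc u - k * m) = 0" for k
    using min_diff_mult_cases[of u "u div m" m "u mod m"] by simp_all
  have q: "u div m < d" using assms(1) by (simp add: less_mult_imp_div_less)
  show jd: "j < d" using q by (simp add: j_def)
  have kj: "d - Suc j = u div m" using q by (simp add: j_def)
  show "right_chain_elt d m u ! j = Suc j + u mod m"
    using cases(1)[OF kj] jd by (simp add: nth_right_chain_elt)
  show "right_chain_elt d m (Suc u) = raise_at (right_chain_elt d m u) j"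
  proof (rule nth_equalityI)
    fix i assume "i < length (right_chain_elt d m (Suc u))"
    then have i: "i < d" by simp
    consider "i = j" | "i < j" | "j < i" by linarith
    then show "right_chain_elt d m (Suc u) ! i = raise_at (right_chain_elt d m u) j ! i"
    proof cases
      case 1
      then show ?thesis using cases(1)[OF kj] i by (simp add: nth_right_chain_elt nth_raise_at)
    next
      case 2
      then have "u div m < d - Suc i" using jd by (simp add: j_def)
      then show ?thesis using cases(3) 2 i jd by (simp add: nth_right_chain_elt nth_raise_at)
    next
      case 3
      then have "d - Suc i < u div m" using i q by (simp add: j_def)
      then show ?thesis using cases(2) 3 i jd by (simp add: nth_right_chain_elt nth_raise_at)
    qed
  qed simp
  fix i assume "i < j"
  then have "u div m < d - Suc i" "i < d" using jd by (auto simp: j_def)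
  then show "right_chain_elt d m (Suc u) ! i = Suc i"
    using cases(3) by (simp add: nth_right_chain_elt)
qed

lemma length_right_chain [simp]: "length (right_chain d m) = Suc (d * m)"
  by (simp add: right_chain_def del: upt_Suc)

lemma nth_right_chain: "u \<le> d * m \<Longrightarrow> right_chain d m ! u = right_chain_elt d m u"
  by (simp add: right_chain_def nth_upt del: upt_Suc)

lemma maxchain_right_chain:
  assumes "d < n"
  shows "maxchain d n (right_chain d (n - d))"
proof -
  let ?m = "n - d"
  have n: "n = d + ?m" using assms by simp
  have ne: "right_chain d ?m \<noteq> []" by (metis length_right_chain list.size(3) nat.simps(3))
  have "covers d n (right_chain d ?m ! t) (right_chain d ?m ! Suc t)"
    if "Suc t < length (right_chain d ?m)" for t
  proof -
    have t: "t < d * ?m" using that by simp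
    show ?thesis
      using covers_raise_at[of "right_chain_elt d ?m t" d n] right_chain_elt_Suc[OF t]
        right_chain_elt_in_Idn[of d ?m] n t by (metis nth_right_chain less_imp_le Suc_leI)
  qed
  moreover have "hd (right_chain d ?m) = bottom d"
    using ne nth_right_chain[of 0 d ?m] right_chain_elt_0 by (simp add: hd_conv_nth)
  moreover have "last (right_chain d ?m) = top d n"
    using ne nth_right_chain[of "d * ?m" d ?m] right_chain_elt_last[of d ?m] n
    by (simp add: last_conv_nth)
  ultimately show ?thesis using ne by (simp add: maxchain_def)
qed

lemma step_op_right_chain:
  assumes "d < n" "1 \<le> u" "u \<le> d * (n - d)"
  defines "j \<equiv> d - Suc ((u - 1) div (n - d))"
  shows "step_op d n (right_chain d (n - d)) u = (Suc j + (u - 1) mod (n - d), Suc j)"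
proof -
  let ?m = "n - d"
  have u: "u - 1 < d * ?m" using assms by simp
  have n: "n = d + ?m" using assms by simp
  have x: "right_chain_elt d ?m (u - 1) \<in> Idn d n"
    and y: "raise_at (right_chain_elt d ?m (u - 1)) j \<in> Idn d n"
  proof -
    have "Suc (u - 1) = u" using assms(2) by simp
    then show "right_chain_elt d ?m (u - 1) \<in> Idn d n"
        "raise_at (right_chain_elt d ?m (u - 1)) j \<in> Idn d n"
      using right_chain_elt_in_Idn[of d ?m] right_chain_elt_Suc(2)[OF u] n unfolding j_def by metis+
  qed
  have "step_op d n (right_chain d ?m) u = (right_chain_elt d ?m (u - 1) ! j, Suc j)"
  proof (rule step_op_raise_at[OF x y])
    show "j < d" using right_chain_elt_Suc(1)[OF u] unfolding j_def .
    show "right_chain d ?m ! (u - 1) = right_chain_elt d ?m (u - 1)"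
      using assms by (simp add: nth_right_chain)
    show "right_chain d ?m ! u = raise_at (right_chain_elt d ?m (u - 1)) j"
      using assms right_chain_elt_Suc(2)[OF u] by (simp add: nth_right_chain j_def)
  qed
  then show ?thesis using right_chain_elt_Suc(3)[OF u] unfolding j_def by simp
qed

lemma right_chain_pos_range:
  assumes "admissible d n p"
  shows "right_chain_pos d (n - d) p \<in> {1..d * (n - d)}"
proof -
  obtain s h where p: "p = (s, h)" by fastforce
  with assms have h: "1 \<le> h" "h \<le> d" "h \<le> s" "s < n - d + h" by (auto simp: admissible_def)
  then have "(d - h) * (n - d) + (s - h) + 1 \<le> Suc (d - h) * (n - d)" by simp
  also have "\<dots> \<le> d * (n - d)" using h by (intro mult_le_mono1) simp
  finally show ?thesis using p by (simp add: right_chain_pos_def)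
qed

lemma step_op_right_chain_pos:
  assumes "d < n" "admissible d n p"
  shows "step_op d n (right_chain d (n - d)) (right_chain_pos d (n - d) p) = p"
proof -
  obtain s h where p: "p = (s, h)" by fastforce
  let ?m = "n - d" and ?u = "right_chain_pos d (n - d) p"
  have h: "1 \<le> h" "h \<le> d" "h \<le> s" "s - h < ?m" using assms p by (auto simp: admissible_def)
  have u: "?u - 1 = (d - h) * ?m + (s - h)" by (simp add: p right_chain_pos_def)
  have "(?u - 1) div ?m = d - h" "(?u - 1) mod ?m = s - h"
    unfolding u using h(4) by simp_all
  moreover have "d - Suc (d - h) = h - 1" using h by simp
  ultimately show ?thesis
    using step_op_right_chain[OF assms(1)] right_chain_pos_range[OF assms(2)] h p by simp
qed

lemma right_chain_pos_step_op:
  assumes "d < n" "1 \<le> u" "u \<le> d * (n - d)"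
  shows "right_chain_pos d (n - d) (step_op d n (right_chain d (n - d)) u) = u"
proof -
  let ?m = "n - d"
  have "(u - 1) div ?m < d" using assms by (simp add: less_mult_imp_div_less)
  then have "d - Suc (d - Suc ((u - 1) div ?m)) = (u - 1) div ?m" by simp
  then have "right_chain_pos d ?m (step_op d n (right_chain d ?m) u)
      = (u - 1) div ?m * ?m + (u - 1) mod ?m + 1"
    using step_op_right_chain[OF assms] by (simp add: right_chain_pos_def)
  also have "\<dots> = u" using assms(2) div_mult_mod_eq[of "u - 1" ?m] by linarith
  finally show ?thesis .
qed

lemma right_chain_pos_less:
  assumes "admissible d n (s, h)" "admissible d n (s', h')" "h' < h"
  shows "right_chain_pos d (n - d) (s, h) < right_chain_pos d (n - d) (s', h')"
proof -
  have h: "h \<le> s" "s < n - d + h" using assms(1) by (auto simp: admissible_def)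
  then have "(d - h) * (n - d) + (s - h) + 1 \<le> Suc (d - h) * (n - d)" by simp
  also have "\<dots> \<le> (d - h') * (n - d)" using assms by (intro mult_le_mono1) (auto simp: admissible_def)
  finally show ?thesis by (simp add: right_chain_pos_def)
qed

text \<open>Here \<open>x\<close> lowers a later entry of the successor than the right-chain element does, because
  all entries before that one are already as small as possible.\<close>

lemma right_chain_elt_lex_least:
  assumes "d < n" "k < d * (n - d)" "covers d n x (right_chain_elt d (n - d) (Suc k))"
    "x \<noteq> right_chain_elt d (n - d) k"
  shows "lex_less (right_chain_elt d (n - d) k) x"
proof -
  let ?y = "right_chain_elt d (n - d) (Suc k)" and ?z = "right_chain_elt d (n - d) k"
  define j where "j = d - Suc (k div (n - d))"
  obtain j' where j': "j' < d" "?y = raise_at x j'"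
    using covers_imp_raise_at[OF assms(3)] by blast
  have x: "x \<in> Idn d n" using assms(3) by (simp add: covers_def)
  then have lx: "length x = d" by (rule Idn_length)
  have j: "j < d" "?y = raise_at ?z j"
    using right_chain_elt_Suc(1,2)[OF assms(2)] by (simp_all add: j_def)
  have "j' \<noteq> j"
  proof
    assume "j' = j"
    then have "raise_at x j = raise_at ?z j" using j j' by simp
    then have "x = ?z" using j(1) lx by (simp add: raise_at_eq_iff)
    with assms(4) show False ..
  qed
  moreover have "\<not> j' < j"
  proof
    assume "j' < j"
    then have "?y ! j' = Suc j'" using right_chain_elt_Suc(4)[OF assms(2)] by (simp add: j_def)
    then show False using Idn_nth_lower[OF x j'(1)] j' lx by (simp add: nth_raise_at)
  qed
  ultimately have "j < j'" by simp
  with j j' lx show ?thesis by (intro lex_less_if_raise_at_eq[of _ j _ j']) simp_all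
qed

text \<open>Compare from the top: at the highest index where \<open>c\<close> leaves the right chain, both
  elements are covered by the same element, so the previous lemma applies.\<close>

lemma chain_word_right_chain_less:
  assumes "d < n" "maxchain d n c" "c \<noteq> right_chain d (n - d)"
  shows "lex_less (chain_word (right_chain d (n - d))) (chain_word c)"
proof -
  let ?R = "right_chain d (n - d)" and ?r = "d * (n - d)"
  have lc: "length c = Suc ?r" using maxchain_length[OF assms(2)] assms(1) by simp
  obtain k where k: "k < Suc ?r" "c ! k \<noteq> ?R ! k"
    and above: "\<And>i. k < i \<Longrightarrow> i < Suc ?r \<Longrightarrow> c ! i = ?R ! i"
    using obtain_last_difference[of c ?R] assms(3) lc by auto
  have "c ! ?r = ?R ! ?r"
    using maxchain_nth_last[OF assms(2)] maxchain_nth_last[OF maxchain_right_chain[OF assms(1)]] lc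
    by simp
  with k have kr: "k < ?r" by (metis less_antisym)
  have R: "?R ! k = right_chain_elt d (n - d) k" "?R ! Suc k = right_chain_elt d (n - d) (Suc k)"
    using kr by (simp_all add: nth_right_chain)
  have "covers d n (c ! k) (right_chain_elt d (n - d) (Suc k))"
    using maxchain_covers[OF assms(2), of k] above[of "Suc k"] kr lc R(2) by simp
  then have less: "lex_less (?R ! k) (c ! k)"
    using right_chain_elt_lex_least[OF assms(1) kr] k(2) R(1) by simp
  let ?i = "?r - k"
  have "take ?i (rev ?R) = take ?i (rev c)"
    by (rule nth_equalityI) (use lc above in \<open>auto simp: rev_nth\<close>)
  moreover have "length (c ! k) = d" "length (?R ! k) = d"
    using maxchain_nth_in_Idn[OF assms(2), of k] assms(1) k(1) lc R(1) by (simp_all add: Idn_length)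
  ultimately show ?thesis
    unfolding chain_word_def using lc kr less
    by (intro lex_less_concat[of _ _ ?i]) (simp_all add: rev_nth)
qed

lemma C_right_eq_right_chain:
  assumes "d < n"
  shows "C_right d n = right_chain d (n - d)"
  unfolding C_right_def
proof (rule the_equality)
  show "maxchain d n (right_chain d (n - d)) \<and> (\<forall>c'. maxchain d n c' \<and> c' \<noteq> right_chain d (n - d)
      \<longrightarrow> lex_less (chain_word (right_chain d (n - d))) (chain_word c'))"
    using maxchain_right_chain[OF assms] chain_word_right_chain_less[OF assms] by blast
next
  fix c assume "maxchain d n c \<and>
    (\<forall>c'. maxchain d n c' \<and> c' \<noteq> c \<longrightarrow> lex_less (chain_word c) (chain_word c'))"
  then show "c = right_chain d (n - d)"
    using maxchain_right_chain[OF assms] chain_word_right_chain_less[OF assms] lex_less_asym by metis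
qed

section \<open>The permutation \<open>\<sigma>_C\<close>\<close>

lemma admissible_step_op:
  assumes "maxchain d n c" "d < n" "t \<in> {1..d * (n - d)}"
  shows "admissible d n (step_op d n c t)"
proof -
  have "t < length c" using maxchain_length[OF assms(1)] assms(2,3) by simp
  with assms show ?thesis by (metis atLeastAtMost_iff maxchain_step_op)
qed

lemma sigma_eq_right_chain_pos:
  assumes "maxchain d n c" "d < n" "t \<in> {1..d * (n - d)}"
  shows "sigma d n c t = right_chain_pos d (n - d) (step_op d n c t)"
proof -
  let ?p = "step_op d n c t"
  have adm: "admissible d n ?p" using admissible_step_op[OF assms] .
  have "(THE u. u \<in> {1..d * (n - d)} \<and> step_op d n (C_right d n) u = ?p) = right_chain_pos d (n - d) ?p"
  proof (rule the_equality)
    show "right_chain_pos d (n - d) ?p \<in> {1..d * (n - d)} \<and>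
        step_op d n (C_right d n) (right_chain_pos d (n - d) ?p) = ?p"
      using right_chain_pos_range[OF adm] step_op_right_chain_pos[OF assms(2) adm]
        C_right_eq_right_chain[OF assms(2)] by simp
  next
    fix u assume "u \<in> {1..d * (n - d)} \<and> step_op d n (C_right d n) u = ?p"
    then show "u = right_chain_pos d (n - d) ?p"
      using right_chain_pos_step_op[OF assms(2)] C_right_eq_right_chain[OF assms(2)] by force
  qed
  with assms(3) show ?thesis by (simp add: sigma_def)
qed

text \<open>After \<open>f_{s,h}\<close> is applied, the \<open>h\<close>-th entry stays above \<open>s\<close>.\<close>

lemma step_op_inj:
  assumes "maxchain d n c" "d < n" "1 \<le> u" "u < v" "v < length c"
  shows "step_op d n c u \<noteq> step_op d n c v"
proof
  assume eq: "step_op d n c u = step_op d n c v"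
  obtain a where a: "a < d" "c ! u = raise_at (c ! (u - 1)) a"
      "step_op d n c u = (c ! (u - 1) ! a, Suc a)"
    using maxchain_step_op[OF assms(1,2,3)] assms(4,5) by (metis order.strict_trans)
  obtain b where "step_op d n c v = (c ! (v - 1) ! b, Suc b)"
    using maxchain_step_op[OF assms(1,2)] assms(3-5) by (metis le_less_trans less_imp_le_nat not_le)
  with eq a(3) have same: "c ! (u - 1) ! a = c ! (v - 1) ! a" by auto
  have "ile (c ! u) (c ! (v - 1))" using maxchain_ile[OF assms(1)] assms by simp
  moreover have "c ! u \<in> Idn d n" "c ! (u - 1) \<in> Idn d n"
    using maxchain_nth_in_Idn[OF assms(1)] assms by simp_all
  then have "length (c ! u) = d" "length (c ! (u - 1)) = d" by (simp_all add: Idn_length)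
  ultimately have "c ! u ! a \<le> c ! (v - 1) ! a" "c ! u ! a = Suc (c ! (u - 1) ! a)"
    using a(1) by (auto simp: ile_def a(2) nth_raise_at)
  with same show False by simp
qed

lemma sigma_permutes:
  assumes "maxchain d n c" "d < n"
  shows "sigma d n c permutes {1..d * (n - d)}"
proof (rule bij_imp_permutes)
  let ?I = "{1..d * (n - d)}"
  have "inj_on (sigma d n c) ?I"
  proof (rule inj_onI)
    fix u v assume uv: "u \<in> ?I" "v \<in> ?I" "sigma d n c u = sigma d n c v"
    then have "step_op d n c u = step_op d n c v"
      using sigma_eq_right_chain_pos[OF assms] step_op_right_chain_pos[OF assms(2)]
        admissible_step_op[OF assms] by metis
    moreover have "length c = Suc (d * (n - d))" using maxchain_length[OF assms(1)] assms(2) by simp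
    ultimately show "u = v"
      using step_op_inj[OF assms, of u v] step_op_inj[OF assms, of v u] uv(1,2)
      by (cases u v rule: linorder_cases) auto
  qed
  moreover have "sigma d n c ` ?I \<subseteq> ?I"
    using sigma_eq_right_chain_pos[OF assms] right_chain_pos_range[OF admissible_step_op[OF assms]]
    by auto
  ultimately show "bij_betw (sigma d n c) ?I ?I"
    by (simp add: bij_betw_def endo_inj_surj)
qed (auto simp: sigma_def)

section \<open>Four-element intervals\<close>

text \<open>Comparing entry sums, an element of the interval between \<open>x\<close> and \<open>x\<close> raised twice is either
  an end point or raises a single entry of \<open>x\<close>, which must be one of the two raised ones.\<close>

lemma interval_raise_at_raise_at_subset:
  assumes x: "x \<in> Idn d n" and a: "a < d" and b: "b < d"
  shows "interval d n x (raise_at (raise_at x a) b)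
    \<subseteq> {x, raise_at x a, raise_at x b, raise_at (raise_at x a) b}"
proof
  let ?y = "raise_at (raise_at x a) b"
  fix z assume "z \<in> interval d n x ?y"
  then have xz: "ile x z" and zy: "ile z ?y" by (auto simp: interval_def)
  have lx: "length x = d" using Idn_length[OF x] .
  have sum_y: "sum_list ?y = Suc (Suc (sum_list x))"
    using a b lx by (simp add: sum_list_raise_at)
  consider "sum_list z = sum_list x" | "sum_list z = Suc (sum_list x)" | "sum_list z = sum_list ?y"
    using ile_imp_sum_list_le[OF xz] ile_imp_sum_list_le[OF zy] sum_y by linarith
  then show "z \<in> {x, raise_at x a, raise_at x b, ?y}"
  proof cases
    case 1
    then show ?thesis using sum_list_less_if_iless[OF xz] by fastforce
  next
    case 3
    then show ?thesis using sum_list_less_if_iless[OF zy] by fastforce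
  next
    case 2
    then have "z \<noteq> x" by auto
    then obtain k where k: "k < d" "x ! k \<noteq> z ! k"
      using xz lx nth_equalityI[of x z] by (auto simp: ile_def)
    then have "x ! k < z ! k" using xz lx by (simp add: ile_def order_le_neq_trans)
    moreover have "z ! k \<le> ?y ! k" using zy k(1) lx by (simp add: ile_def)
    ultimately have "k = a \<or> k = b" using a b lx by (auto simp: nth_raise_at split: if_splits)
    moreover have "raise_at x k = z"
    proof (rule ccontr)
      assume "raise_at x k \<noteq> z"
      then have "sum_list (raise_at x k) < sum_list z"
        using sum_list_less_if_iless ile_raise_at_if_less[OF xz] \<open>x ! k < z ! k\<close> k(1) lx by simp
      with 2 show False using k(1) lx by (simp add: sum_list_raise_at)
    qed
    ultimately show ?thesis by auto
  qed
qed

lemma interval_card_4: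
  assumes x: "x \<in> Idn d n" and a: "a < d" and b: "b < d"
    and card: "card (interval d n x (raise_at (raise_at x a) b)) = 4"
  shows "a \<noteq> b"
    and "interval d n x (raise_at (raise_at x a) b) - {x, raise_at x a, raise_at (raise_at x a) b}
      = {raise_at x b}"
proof -
  let ?I = "interval d n x (raise_at (raise_at x a) b)"
  let ?T = "{x, raise_at x a, raise_at (raise_at x a) b}"
  have sub: "?I \<subseteq> insert (raise_at x b) ?T"
    using interval_raise_at_raise_at_subset[OF x a b] by auto
  have "\<not> ?I \<subseteq> ?T"
  proof
    assume "?I \<subseteq> ?T"
    then have "card ?I \<le> card ?T" by (intro card_mono) auto
    also have "\<dots> \<le> 3" by (simp add: card_insert_if)
    finally show False using card by simp
  qed
  with sub show "a \<noteq> b" by auto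
  from sub \<open>\<not> ?I \<subseteq> ?T\<close> show "?I - ?T = {raise_at x b}" by auto
qed

lemma maxchain_square:
  assumes c: "maxchain d n c" and dn: "d < n" and t: "1 \<le> t" "Suc t < length c"
    and card: "card (interval d n (c ! (t - 1)) (c ! (t + 1))) = 4"
  obtains a b where "a < d" "b < d" "a \<noteq> b"
    "c ! t = raise_at (c ! (t - 1)) a" "c ! Suc t = raise_at (c ! t) b"
    "other_elt d n c t = raise_at (c ! (t - 1)) b"
    "step_op d n c t = (c ! (t - 1) ! a, Suc a)" "step_op d n c (Suc t) = (c ! (t - 1) ! b, Suc b)"
    "admissible d n (c ! (t - 1) ! a, Suc a)" "admissible d n (c ! (t - 1) ! b, Suc b)"
    "raise_at (c ! (t - 1)) b \<in> Idn d n"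
proof -
  let ?x = "c ! (t - 1)"
  obtain a where a: "a < d" "c ! t = raise_at ?x a" "step_op d n c t = (?x ! a, Suc a)"
      "admissible d n (?x ! a, Suc a)"
    using maxchain_step_op[OF c dn t(1)] t(2) by (metis Suc_lessD)
  obtain b where b: "b < d" "c ! Suc t = raise_at (c ! t) b"
      "step_op d n c (Suc t) = (c ! t ! b, Suc b)" "admissible d n (c ! t ! b, Suc b)"
    using maxchain_step_op[OF c dn, of "Suc t"] t(2) by auto
  have x: "?x \<in> Idn d n" using maxchain_nth_in_Idn[OF c] dn t by simp
  have ab: "a \<noteq> b"
    and other: "interval d n ?x (c ! (t + 1)) - {?x, c ! t, c ! (t + 1)} = {raise_at ?x b}"
    using interval_card_4[OF x a(1) b(1)] card a(2) b(2) by simp_all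
  have "c ! t ! b = ?x ! b" using a(1,2) b(1) ab Idn_length[OF x] by (simp add: nth_raise_at)
  moreover have "other_elt d n c t = raise_at ?x b"
    unfolding other_elt_def using other by simp
  moreover have "raise_at ?x b \<in> Idn d n"
    using other by (auto simp: interval_def)
  ultimately show ?thesis using that a b ab by simp
qed

lemma step_op_list_update:
  "u \<noteq> t \<Longrightarrow> u - 1 \<noteq> t \<Longrightarrow> step_op d n (c[t := v]) u = step_op d n c u"
  by (simp add: step_op_def)

lemma sigma_eq_comp_simple_tr_if_step_op_swapped:
  assumes "1 \<le> t" "Suc t \<le> d * (n - d)"
    "step_op d n c' t = step_op d n c (Suc t)" "step_op d n c' (Suc t) = step_op d n c t"
    "\<And>u. u \<noteq> t \<Longrightarrow> u \<noteq> Suc t \<Longrightarrow> step_op d n c' u = step_op d n c u"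
  shows "sigma d n c' = sigma d n c \<circ> simple_tr t"
proof
  fix u
  consider "u = t" | "u = Suc t" | "u \<noteq> t" "u \<noteq> Suc t" by blast
  then show "sigma d n c' u = (sigma d n c \<circ> simple_tr t) u"
    by cases (use assms in \<open>simp_all add: sigma_def simple_tr_other\<close>)
qed

lemma sigma_exchange:
  assumes c: "maxchain d n c" and dn: "d < n" and t: "1 \<le> t" "Suc t \<le> d * (n - d)"
    and card: "card (interval d n (c ! (t - 1)) (c ! (t + 1))) = 4"
  shows "sigma d n (c[t := other_elt d n c t]) = sigma d n c \<circ> simple_tr t"
    and "lex_less (c ! t) (other_elt d n c t) \<longleftrightarrow> sigma d n c t < sigma d n c (Suc t)"
proof -
  let ?x = "c ! (t - 1)"
  have lc: "length c = Suc (d * (n - d))" using maxchain_length[OF c] dn by simp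
  with t have t': "Suc t < length c" by simp
  obtain a b where ab: "a < d" "b < d" "a \<noteq> b"
    "c ! t = raise_at ?x a" "c ! Suc t = raise_at (c ! t) b"
    "other_elt d n c t = raise_at ?x b"
    "step_op d n c t = (?x ! a, Suc a)" "step_op d n c (Suc t) = (?x ! b, Suc b)"
    "admissible d n (?x ! a, Suc a)" "admissible d n (?x ! b, Suc b)"
    and xb: "raise_at ?x b \<in> Idn d n"
    using maxchain_square[OF c dn t(1) t' card] by blast
  have x: "?x \<in> Idn d n" using maxchain_nth_in_Idn[OF c] dn t' by simp
  then have lx: "length ?x = d" by (rule Idn_length)
  let ?c' = "c[t := raise_at ?x b]"
  have xba: "raise_at (raise_at ?x b) a \<in> Idn d n"
    using maxchain_nth_in_Idn[OF c, of "Suc t"] dn t' ab(4,5) raise_at_commute[of a ?x b] lx ab(1,2)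
    by simp
  show "sigma d n (c[t := other_elt d n c t]) = sigma d n c \<circ> simple_tr t"
  proof (rule sigma_eq_comp_simple_tr_if_step_op_swapped[OF t])
    show "step_op d n (c[t := other_elt d n c t]) t = step_op d n c (Suc t)"
      using step_op_raise_at[OF x xb ab(2)] t t' ab(6,8) by simp
    have "step_op d n ?c' (Suc t) = (raise_at ?x b ! a, Suc a)"
      by (rule step_op_raise_at[OF xb xba ab(1)])
        (use t' ab(4,5) raise_at_commute[of a ?x b] lx ab(1,2) in simp_all)
    then show "step_op d n (c[t := other_elt d n c t]) (Suc t) = step_op d n c t"
      using ab(1-3,6,7) lx by (simp add: nth_raise_at)
  qed (simp_all add: step_op_list_update)
  have "sigma d n c t = right_chain_pos d (n - d) (?x ! a, Suc a)"
    "sigma d n c (Suc t) = right_chain_pos d (n - d) (?x ! b, Suc b)"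
    using sigma_eq_right_chain_pos[OF c dn] t ab(7,8) by simp_all
  then have "sigma d n c t < sigma d n c (Suc t) \<longleftrightarrow> b < a"
    using right_chain_pos_less[OF ab(9,10)] right_chain_pos_less[OF ab(10,9)] ab(3)
    by (metis Suc_less_eq less_asym' linorder_neqE_nat)
  then show "lex_less (c ! t) (other_elt d n c t) \<longleftrightarrow> sigma d n c t < sigma d n c (Suc t)"
    using lex_less_raise_at_iff[of a ?x b] ab(1-4,6) lx by simp
qed

theorem proposition2p26:
  fixes d n r t :: nat and c :: "nat list list"
  assumes "1 \<le> d" and "d < n" and "r = d * (n - d)"
    and "maxchain d n c"
    and "1 \<le> t" and "t \<le> r - 1"
  shows "(\<forall>c'. F_op d n t c = Some c' \<longrightarrow>
            sigma d n c' = sigma d n c \<circ> simple_tr t \<and>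
            coxeter_length r (sigma d n c') = coxeter_length r (sigma d n c) + 1 \<and>
            weak_less_R r (sigma d n c) (sigma d n c'))
       \<and> (\<forall>c'. E_op d n t c = Some c' \<longrightarrow>
            sigma d n c' = sigma d n c \<circ> simple_tr t \<and>
            coxeter_length r (sigma d n c') + 1 = coxeter_length r (sigma d n c) \<and>
            weak_less_R r (sigma d n c') (sigma d n c))"
proof -
  have t: "1 \<le> t" "Suc t \<le> d * (n - d)" and r: "Suc t \<le> r" using assms(1-3,5,6) by simp_all
  have perm: "sigma d n c permutes {1..r}" using sigma_permutes[OF assms(4,2)] assms(3) by simp
  note exchange = sigma_exchange[OF assms(4,2) t]
  have F: "sigma d n c' = sigma d n c \<circ> simple_tr t \<and>
      coxeter_length r (sigma d n c') = coxeter_length r (sigma d n c) + 1 \<and>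
      weak_less_R r (sigma d n c) (sigma d n c')" if "F_op d n t c = Some c'" for c'
  proof -
    from that have c': "c' = c[t := other_elt d n c t]" and "right_peak d n c t"
      by (auto simp: F_op_def split: if_splits)
    then have "sigma d n c' = sigma d n c \<circ> simple_tr t" "sigma d n c t < sigma d n c (Suc t)"
      using exchange by (auto simp: right_peak_def)
    then show ?thesis using coxeter_length_comp_simple_tr_ascent[OF perm t(1) r] by simp
  qed
  have E: "sigma d n c' = sigma d n c \<circ> simple_tr t \<and>
      coxeter_length r (sigma d n c') + 1 = coxeter_length r (sigma d n c) \<and>
      weak_less_R r (sigma d n c') (sigma d n c)" if "E_op d n t c = Some c'" for c'
  proof -
    from that have c': "c' = c[t := other_elt d n c t]" and "left_peak d n c t"
      by (auto simp: E_op_def split: if_splits)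
    then have "sigma d n c' = sigma d n c \<circ> simple_tr t" "\<not> sigma d n c t < sigma d n c (Suc t)"
      using exchange lex_less_asym by (auto simp: left_peak_def)
    moreover have "sigma d n c t \<noteq> sigma d n c (Suc t)"
      using permutes_inj[OF perm] by (metis injD n_not_Suc_n)
    ultimately show ?thesis using coxeter_length_comp_simple_tr_descent[OF perm t(1) r] by simp
  qed
  from F E show ?thesis by blast
qed

end
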